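(* Let $K$ be a Cantor set, let $T:K\to K$ be an endomorphism, and let $K_1,\dots,K_N$ be pairwise disjoint Cantor sets with $K=\bigcup_{i=1}^N K_i$. Then there exists an endomorphism $\widetilde T:K\to K$ such that for every $x\in K$ and every $1\le i\le N$, $\widetilde T(x)\in K_i$ if and only if $T(x)\in K_i$, and the orbit of every point of $K$ under $\widetilde T$ is finally periodic.
   Context: A Cantor set is a nonempty totally disconnected, perfect, compact metric space. An endomorphism of $K$ is a continuous surjection $K\to K$. The orbit of $x$ under a map $S$ is finally periodic if there exist integers $j,M>0$ with $S^{M+j}(x)=S^{j}(x)$. *)

theory Defs
  imports "HOL-Analysis.Analysis"
begin

definition cantor_set :: "'a::metric_space set \<Rightarrow> bool" where
  "cantor_set K \<longleftrightarrow> K \<noteq> {} \<and> compact K \<and> (\<forall>x\<in>K. x islimpt K)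
     \<and> (\<forall>C. C \<subseteq> K \<longrightarrow> connected C \<longrightarrow> (\<exists>a. C \<subseteq> {a}))"

definition endomorphism :: "'a::topological_space set \<Rightarrow> ('a \<Rightarrow> 'a) \<Rightarrow> bool" where
  "endomorphism K T \<longleftrightarrow> continuous_on K T \<and> T ` K = K"

definition finally_periodic :: "('a \<Rightarrow> 'a) \<Rightarrow> 'a \<Rightarrow> bool" where
  "finally_periodic S x \<longleftrightarrow> (\<exists>j M::nat. j > 0 \<and> M > 0 \<and> (S ^^ (M + j)) x = (S ^^ j) x)"

end

(*
  Put A_i = T^-1(K_i). The sets A_i form a clopen partition of K into nonempty pieces, and the
  requirement on the new map is that it sends A_i into K_i. Choose a map nxt on the indices with
  A_i \<inter> K_(nxt i) nonempty. Each cell A_i \<inter> K_j is cut into finitely many clopen layers, except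
  that for an index c lying on a cycle of nxt the cell A_c \<inter> K_(nxt c) is cut into infinitely
  many layers converging to a point, its apex. The new map sends the part of layer m inside A_i
  onto the part of layer m - 1 inside K_i, using that any Cantor set maps continuously onto any
  other; it collapses layer 0 onto finitely many anchor points and moves the apices backwards
  along the cycles. Cutting the cells ending in K_j into N + 1 - (preperiod of j) layers makes
  the map surjective. Every orbit descends through the layers to the finite invariant set of
  apices and anchors, so it is finally periodic, and the map is continuous at the apices because
  deep layers of one tower are sent to deep layers of the next.
*)

theory Submission
  imports Defs
begin

section \<open>Clopen subsets of Cantor sets\<close>

definition clopen_in :: "'a::topological_space set \<Rightarrow> 'a set \<Rightarrow> bool" where
  "clopen_in K S \<longleftrightarrow> S \<subseteq> K \<and> closed S \<and> closed (K - S)"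

lemma cantor_set_closed: "cantor_set K \<Longrightarrow> closed K"
  by (simp add: cantor_set_def compact_imp_closed)

lemma clopen_in_self: "closed K \<Longrightarrow> clopen_in K K"
  by (simp add: clopen_in_def)

lemma clopen_in_empty: "closed K \<Longrightarrow> clopen_in K {}"
  by (simp add: clopen_in_def)

lemma clopen_in_trans:
  assumes "clopen_in K S" "clopen_in S U"
  shows "clopen_in K U"
proof -
  have "K - U = (K - S) \<union> (S - U)"
    using assms by (auto simp: clopen_in_def)
  then show ?thesis
    using assms by (auto simp: clopen_in_def)
qed

lemma clopen_in_Int: "clopen_in K S \<Longrightarrow> clopen_in K U \<Longrightarrow> clopen_in K (S \<inter> U)"
  unfolding clopen_in_def by (auto simp: Diff_Int)

lemma clopen_in_Diff:
  assumes "clopen_in K S" "clopen_in K U"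
  shows "clopen_in K (S - U)"
proof -
  have "K - (S - U) = (K - S) \<union> U" "S - U = S \<inter> (K - U)"
    using assms by (auto simp: clopen_in_def)
  then show ?thesis
    using assms by (auto simp: clopen_in_def)
qed

lemma clopen_in_UN:
  assumes "finite J" "closed K" "\<And>j. j \<in> J \<Longrightarrow> clopen_in K (F j)"
  shows "clopen_in K (\<Union>j\<in>J. F j)"
  using assms by (induction J rule: finite_induct) (auto simp: clopen_in_def Diff_Un)

lemma clopen_in_open_Compl: "clopen_in K S \<Longrightarrow> open (- (K - S))"
  unfolding clopen_in_def by (intro open_Compl) auto

lemma clopen_in_dist_nbhd:
  fixes S :: "'a::metric_space set"
  assumes "clopen_in K S" "x \<in> S"
  shows "\<exists>d>0. \<forall>y\<in>K. dist y x < d \<longrightarrow> y \<in> S"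
proof -
  have "open (- (K - S))" "x \<in> - (K - S)"
    using assms clopen_in_open_Compl by (auto simp: clopen_in_def)
  then obtain d where "d > 0" "ball x d \<subseteq> - (K - S)"
    using open_contains_ball by blast
  then show ?thesis by (auto simp: dist_commute subset_iff)
qed

lemma clopen_in_partition:
  assumes "finite J" "\<And>j. j \<in> J \<Longrightarrow> closed (F j)" "disjoint_family_on F J"
    and "K = (\<Union>j\<in>J. F j)" "i \<in> J"
  shows "clopen_in K (F i)"
proof -
  have "K - F i = (\<Union>j\<in>J - {i}. F j)"
    using assms(3-5) by (auto simp: disjoint_family_on_def)
  then show ?thesis
    using assms by (auto simp: clopen_in_def)
qed

lemma cantor_set_clopen_in:
  assumes K: "cantor_set K" and S: "clopen_in K S" "S \<noteq> {}"
  shows "cantor_set S"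
proof -
  have "compact S"
    using K S compact_Int_closed[of K S] by (auto simp: cantor_set_def clopen_in_def Int_absorb1)
  moreover have "x islimpt S" if "x \<in> S" for x
  proof (rule islimptI)
    fix U assume "x \<in> U" "open U"
    then have "open (U \<inter> - (K - S))" "x \<in> U \<inter> - (K - S)"
      using S that clopen_in_open_Compl by (auto simp: clopen_in_def)
    moreover have "x islimpt K"
      using K S that by (auto simp: cantor_set_def clopen_in_def)
    ultimately obtain y where "y \<in> K" "y \<in> U \<inter> - (K - S)" "y \<noteq> x"
      using islimptE by metis
    then show "\<exists>y\<in>S. y \<in> U \<and> y \<noteq> x" by auto
  qed
  ultimately show ?thesis
    using K S by (auto simp: cantor_set_def clopen_in_def)
qed

text \<open>In a compact Hausdorff space quasi-components and components coincide, so distinct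
  points of a totally disconnected compact set are separated by a clopen set.\<close>
lemma cantor_set_separate_points:
  assumes C: "cantor_set C" and xy: "x \<in> C" "y \<in> C" "x \<noteq> y"
  shows "\<exists>U. clopen_in C U \<and> x \<in> U \<and> y \<notin> U"
proof -
  let ?X = "top_of_set C"
  have "compact_space ?X" "Hausdorff_space ?X"
    using C by (auto simp: cantor_set_def compact_space_subtopology Hausdorff_space_subtopology)
  then have "quasi_components_of ?X = connected_components_of ?X"
    using quasi_eq_connected_components_of by blast
  then have "quasi_component_of ?X x = connected_component_of ?X x"
    by (rule quasi_eq_connected_components_of_pointwise_alt[THEN iffD1, rule_format])
  moreover have "\<not> connected_component_of ?X x y"
  proof
    assume "connected_component_of ?X x y"
    then obtain T where "connectedin ?X T" "x \<in> T" "y \<in> T"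
      unfolding connected_component_of_def by blast
    then have "T \<subseteq> C" "connected T"
      by (auto simp: connectedin_subtopology)
    then obtain a where "T \<subseteq> {a}"
      using C unfolding cantor_set_def by blast
    then show False using \<open>x \<in> T\<close> \<open>y \<in> T\<close> xy by auto
  qed
  ultimately obtain T where T: "x \<in> T" "closedin ?X T" "openin ?X T" "y \<notin> T"
    using xy by (metis quasi_component_of topspace_euclidean_subtopology)
  have "closedin ?X (C - T)"
    using T(3) by (metis closedin_diff closedin_topspace topspace_euclidean_subtopology)
  then have "closed T" "closed (C - T)" "T \<subseteq> C"
    using T(2) cantor_set_closed[OF C] closedin_closed_trans closedin_subset by force+
  then show ?thesis
    using T by (auto simp: clopen_in_def)
qed

lemma cantor_set_clopen_in_ball:
  assumes C: "cantor_set C" and a: "a \<in> C" and e: "e > 0"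
  shows "\<exists>U. clopen_in C U \<and> a \<in> U \<and> U \<subseteq> ball a e"
proof -
  define D where "D = C - ball a e"
  have "compact D"
    unfolding D_def using C by (metis Diff_eq cantor_set_def compact_Int_closed open_ball closed_Compl)
  obtain G where G: "\<And>y. y \<in> D \<Longrightarrow> clopen_in C (G y) \<and> a \<in> G y \<and> y \<notin> G y"
    using cantor_set_separate_points[OF C a] e unfolding D_def by (metis Diff_iff centre_in_ball)
  have "D \<subseteq> (\<Union>y\<in>D. - G y)" "\<And>y. y \<in> D \<Longrightarrow> open (- G y)"
    using G by (auto simp: clopen_in_def)
  then obtain F where F: "F \<subseteq> D" "finite F" "D \<subseteq> (\<Union>y\<in>F. - G y)"
    using compactE_image[OF \<open>compact D\<close>] by metis
  define U where "U = C \<inter> (\<Inter>y\<in>F. G y)"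
  have "clopen_in C U"
  proof -
    have "C - U = (\<Union>y\<in>F. C - G y)" by (auto simp: U_def)
    moreover have "closed (\<Union>y\<in>F. C - G y)"
      using F G by (intro closed_UN) (auto simp: clopen_in_def)
    moreover have "closed U"
      unfolding U_def using F G cantor_set_closed[OF C] by (intro closed_Int closed_INT) (auto simp: clopen_in_def)
    ultimately show ?thesis
      unfolding clopen_in_def by (metis U_def inf_le1)
  qed
  moreover have "a \<in> U"
    using G F a by (auto simp: U_def)
  moreover have "U \<subseteq> ball a e"
  proof
    fix z assume "z \<in> U"
    then have "z \<notin> (\<Union>y\<in>F. - G y)" by (auto simp: U_def)
    then show "z \<in> ball a e"
      using F(3) \<open>z \<in> U\<close> by (auto simp: U_def D_def)
  qed
  ultimately show ?thesis by blast
qed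

section \<open>Decompositions into clopen layers\<close>

lemma cantor_set_shrink:
  assumes M: "cantor_set M" and a: "a \<in> M" and e: "e > 0"
  shows "\<exists>M'. clopen_in M M' \<and> a \<in> M' \<and> M' \<subseteq> ball a e \<and> M - M' \<noteq> {}"
proof -
  obtain b where b: "b \<in> M" "b \<noteq> a"
    using M a islimptE[of a M UNIV] by (auto simp: cantor_set_def)
  obtain U where U: "clopen_in M U" "a \<in> U" "b \<notin> U"
    using cantor_set_separate_points[OF M a b(1)] b(2) by metis
  obtain V where V: "clopen_in M V" "a \<in> V" "V \<subseteq> ball a e"
    using cantor_set_clopen_in_ball[OF M a e] by blast
  show ?thesis
    using U V b clopen_in_Int[OF U(1) V(1)] by (intro exI[of _ "U \<inter> V"]) blast
qed

lemma cantor_set_clopen_tower: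
  assumes W: "cantor_set W" and a: "a \<in> W"
  obtains Mt where "Mt 0 = W" "decseq Mt" "\<And>k. clopen_in W (Mt k)" "\<And>k. a \<in> Mt k"
    "\<And>k. Mt k - Mt (Suc k) \<noteq> {}" "\<And>k. Mt (Suc k) \<subseteq> ball a (inverse (real (Suc k)))"
proof -
  define P where "P k M \<longleftrightarrow> cantor_set M \<and> clopen_in W M \<and> a \<in> M \<and> (k = 0 \<longrightarrow> M = W)"
    for k :: nat and M
  define R where "R k M M' \<longleftrightarrow> M' \<subseteq> M \<and> M - M' \<noteq> {} \<and> M' \<subseteq> ball a (inverse (real (Suc k)))"
    for k :: nat and M M'
  have "\<exists>M'. P (Suc k) M' \<and> R k M M'" if "P k M" for k M
  proof -
    have "cantor_set M" "a \<in> M" "clopen_in W M"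
      using that by (auto simp: P_def)
    moreover obtain M' where "clopen_in M M'" "a \<in> M'" "M' \<subseteq> ball a (inverse (real (Suc k)))" "M - M' \<noteq> {}"
      using cantor_set_shrink[OF calculation(1,2), of "inverse (real (Suc k))"] by auto
    moreover have "cantor_set M'" "clopen_in W M'"
      using calculation cantor_set_clopen_in clopen_in_trans by blast+
    ultimately show ?thesis
      by (auto simp: P_def R_def clopen_in_def intro!: exI[of _ M'])
  qed
  moreover have "P 0 W"
    using W a by (simp add: P_def clopen_in_self cantor_set_closed)
  ultimately obtain Mt where "\<And>k. P k (Mt k) \<and> R k (Mt k) (Mt (Suc k))"
    using dependent_nat_choice[of P R] by blast
  then have P: "\<And>k. P k (Mt k)" and R: "\<And>k. R k (Mt k) (Mt (Suc k))"
    by auto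
  show ?thesis
  proof (rule that)
    show "Mt 0 = W"
      using P[of 0] by (simp add: P_def)
    show "decseq Mt"
      using R by (intro decseq_SucI) (simp add: R_def)
  qed (use P R in \<open>auto simp: P_def R_def\<close>)
qed

lemma disjoint_family_nat_lessI:
  assumes "\<And>m n. m < (n::nat) \<Longrightarrow> P m \<inter> P n = {}"
  shows "disjoint_family P"
  unfolding disjoint_family_on_def using assms by (metis Int_commute linorder_neqE_nat)

lemma decseq_Diff_disjoint:
  assumes "decseq Mt" "m < n"
  shows "(Mt m - Mt (Suc m)) \<inter> Mt n = {}"
  using decseqD[OF assms(1), of "Suc m" n] assms(2) by auto

lemma exists_Diff_Suc_layer:
  assumes "y \<in> Mt 0" "y \<notin> Mt n"
  shows "\<exists>m<n. y \<in> Mt m - Mt (Suc m)"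
  using assms by (induction n) (auto intro: less_SucI)

definition finite_layers :: "'a::topological_space set \<Rightarrow> nat \<Rightarrow> (nat \<Rightarrow> 'a set) \<Rightarrow> bool" where
  "finite_layers X h P \<longleftrightarrow> (\<forall>m. clopen_in X (P m)) \<and> disjoint_family P \<and> (\<Union>m. P m) = X
     \<and> (\<forall>m. P m \<noteq> {} \<longleftrightarrow> X \<noteq> {} \<and> m \<le> h)"

lemma finite_layers_empty: "finite_layers {} h (\<lambda>_. {})"
  by (simp add: finite_layers_def clopen_in_def disjoint_family_on_def)

lemma cantor_set_finite_layers:
  assumes X: "cantor_set X"
  shows "\<exists>P. finite_layers X h P"
proof -
  obtain a where a: "a \<in> X"
    using X by (auto simp: cantor_set_def)
  obtain Mt where Mt: "Mt 0 = X" "decseq Mt" "\<And>k. clopen_in X (Mt k)" "\<And>k. a \<in> Mt k"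
    "\<And>k. Mt k - Mt (Suc k) \<noteq> {}"
    using cantor_set_clopen_tower[OF X a] by metis
  define P where "P m = (if m < h then Mt m - Mt (Suc m) else if m = h then Mt h else {})" for m
  have "clopen_in X (P m)" for m
    using Mt(3) cantor_set_closed[OF X] by (simp add: P_def clopen_in_Diff clopen_in_empty)
  moreover have "disjoint_family P"
  proof (rule disjoint_family_nat_lessI)
    fix m n :: nat assume "m < n"
    moreover have "P n \<subseteq> Mt n" by (auto simp: P_def)
    ultimately show "P m \<inter> P n = {}"
      using decseq_Diff_disjoint[OF Mt(2)] by (auto simp: P_def)
  qed
  moreover have "(\<Union>m. P m) = X"
  proof
    show "(\<Union>m. P m) \<subseteq> X"
      using Mt(1) decseqD[OF Mt(2), of 0] by (auto simp: P_def)
    show "X \<subseteq> (\<Union>m. P m)"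
    proof
      fix y assume "y \<in> X"
      then consider "y \<in> Mt h" | m where "m < h" "y \<in> Mt m - Mt (Suc m)"
        using exists_Diff_Suc_layer[of y Mt h] Mt(1) by blast
      then show "y \<in> (\<Union>m. P m)"
        by cases (auto simp: P_def intro: exI[of _ h] exI[of _ m])
    qed
  qed
  moreover have "P m \<noteq> {} \<longleftrightarrow> X \<noteq> {} \<and> m \<le> h" for m
    using Mt(4,5) a by (auto simp: P_def)
  ultimately show ?thesis
    unfolding finite_layers_def by blast
qed

definition converging_layers :: "'a::metric_space set \<Rightarrow> 'a \<Rightarrow> (nat \<Rightarrow> 'a set) \<Rightarrow> bool" where
  "converging_layers X a P \<longleftrightarrow> a \<in> X \<and> (\<forall>m. clopen_in X (P m) \<and> P m \<noteq> {}) \<and> disjoint_family P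
     \<and> (\<Union>m. P m) = X - {a} \<and> (\<forall>k m. k < m \<longrightarrow> P m \<subseteq> ball a (inverse (real (Suc k))))"

lemma cantor_set_converging_layers:
  assumes X: "cantor_set X" and a: "a \<in> X"
  shows "\<exists>P. converging_layers X a P"
proof -
  obtain Mt where Mt: "Mt 0 = X" "decseq Mt" "\<And>k. clopen_in X (Mt k)" "\<And>k. a \<in> Mt k"
    "\<And>k. Mt k - Mt (Suc k) \<noteq> {}" "\<And>k. Mt (Suc k) \<subseteq> ball a (inverse (real (Suc k)))"
    using cantor_set_clopen_tower[OF X a] by metis
  define P where "P m = Mt m - Mt (Suc m)" for m
  have "clopen_in X (P m) \<and> P m \<noteq> {}" for m
    using Mt(3,5) by (simp add: P_def clopen_in_Diff)
  moreover have "disjoint_family P"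
    using decseq_Diff_disjoint[OF Mt(2)] by (intro disjoint_family_nat_lessI) (auto simp: P_def)
  moreover have "(\<Union>m. P m) = X - {a}"
  proof
    show "(\<Union>m. P m) \<subseteq> X - {a}"
      using Mt(1,4) decseqD[OF Mt(2), of 0] by (auto simp: P_def)
    show "X - {a} \<subseteq> (\<Union>m. P m)"
    proof
      fix y assume y: "y \<in> X - {a}"
      then obtain n where "inverse (real (Suc n)) < dist a y"
        using reals_Archimedean[of "dist a y"] by auto
      then have "y \<notin> Mt (Suc n)"
        using Mt(6)[of n] by auto
      then show "y \<in> (\<Union>m. P m)"
        using exists_Diff_Suc_layer[of y Mt] y Mt(1) by (auto simp: P_def)
    qed
  qed
  moreover have "P m \<subseteq> ball a (inverse (real (Suc k)))" if "k < m" for k m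
    using decseqD[OF Mt(2), of "Suc k" m] Mt(6)[of k] that by (auto simp: P_def)
  ultimately show ?thesis
    using a unfolding converging_layers_def by blast
qed

lemma converging_layers_nbhd:
  assumes P: "converging_layers X a P"
  shows "\<exists>d>0. \<forall>y\<in>X. dist y a < d \<longrightarrow> y = a \<or> (\<exists>m\<ge>n. y \<in> P m)"
proof -
  have "closed (\<Union>m<n. P m)"
    using P by (intro closed_UN) (auto simp: converging_layers_def clopen_in_def)
  moreover have "a \<notin> (\<Union>m<n. P m)"
    using P by (auto simp: converging_layers_def)
  ultimately obtain d where "d > 0" "ball a d \<subseteq> - (\<Union>m<n. P m)"
    using open_contains_ball[of "- (\<Union>m<n. P m)"] by blast
  moreover have "\<exists>m. y \<in> P m" if "y \<in> X" "y \<noteq> a" for y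
    using P that by (auto simp: converging_layers_def)
  ultimately show ?thesis
    by (metis Compl_iff UN_iff dist_commute lessThan_iff mem_ball not_le subsetD)
qed

section \<open>Continuous surjections between Cantor sets\<close>

definition diam_less :: "real \<Rightarrow> 'a::metric_space set \<Rightarrow> bool" where
  "diam_less e S \<longleftrightarrow> (\<forall>x\<in>S. \<forall>y\<in>S. dist x y < e)"

lemma diam_less_subset_ball:
  assumes "S \<subseteq> ball a (e/2)"
  shows "diam_less e S"
  unfolding diam_less_def
proof (intro ballI)
  fix x y assume "x \<in> S" "y \<in> S"
  then have "dist a x < e/2" "dist a y < e/2"
    using assms by auto
  then show "dist x y < e"
    using dist_triangle2[of x y a] by (simp add: dist_commute)
qed

definition clopen_partition :: "'a::topological_space set \<Rightarrow> 'a set set \<Rightarrow> bool" where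
  "clopen_partition X \<P> \<longleftrightarrow> finite \<P> \<and> (\<forall>S\<in>\<P>. clopen_in X S \<and> S \<noteq> {}) \<and> disjoint \<P> \<and> \<Union>\<P> = X"

lemma cantor_set_clopen_partition_member:
  assumes "cantor_set X" "clopen_partition X \<P>" "S \<in> \<P>"
  shows "cantor_set S"
proof -
  have "clopen_in X S" "S \<noteq> {}"
    using assms(2,3) unfolding clopen_partition_def by auto
  then show ?thesis
    using cantor_set_clopen_in assms(1) by blast
qed

lemma clopen_partition_atoms:
  assumes V: "closed V" and F: "finite F" "\<And>a. a \<in> F \<Longrightarrow> clopen_in V (G a)"
  defines "atom z \<equiv> {w \<in> V. \<forall>a\<in>F. w \<in> G a \<longleftrightarrow> z \<in> G a}"
  shows "clopen_partition V (atom ` V)"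
proof -
  have "atom ` V \<subseteq> (\<lambda>A. {w \<in> V. \<forall>a\<in>F. w \<in> G a \<longleftrightarrow> a \<in> A}) ` Pow F"
    unfolding atom_def by (auto intro!: image_eqI[of _ _ "{a \<in> F. _ \<in> G a}"])
  then have "finite (atom ` V)"
    using F(1) by (meson finite_Pow_iff finite_imageI finite_subset)
  moreover have "clopen_in V (atom z)" for z
  proof -
    have "atom z = V \<inter> (\<Inter>a\<in>F. if z \<in> G a then G a else V - G a)"
      unfolding atom_def by (auto split: if_splits)
    moreover have "V - atom z = (\<Union>a\<in>F. if z \<in> G a then V - G a else G a)"
      using F(2) by (auto simp: atom_def clopen_in_def split: if_splits)
    moreover have "closed (V \<inter> (\<Inter>a\<in>F. if z \<in> G a then G a else V - G a))"
      using F V by (intro closed_Int closed_INT) (auto simp: clopen_in_def)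
    moreover have "closed (\<Union>a\<in>F. if z \<in> G a then V - G a else G a)"
      using F by (intro closed_UN) (auto simp: clopen_in_def)
    ultimately show ?thesis
      by (auto simp: clopen_in_def atom_def)
  qed
  moreover have "z \<in> atom z" if "z \<in> V" for z
    using that by (simp add: atom_def)
  moreover have "atom z = atom z'" if "w \<in> atom z" "w \<in> atom z'" for w z z'
    using that unfolding atom_def by blast
  ultimately show ?thesis
    unfolding clopen_partition_def disjoint_def by (auto simp: atom_def)
qed

lemma cantor_set_small_clopen_partition:
  assumes V: "cantor_set V" and e: "e > 0"
  obtains \<P> where "clopen_partition V \<P>" "\<And>S. S \<in> \<P> \<Longrightarrow> diam_less e S"
proof -
  obtain G where G: "\<And>a. a \<in> V \<Longrightarrow> clopen_in V (G a) \<and> a \<in> G a \<and> G a \<subseteq> ball a (e/2)"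
  proof -
    have "\<forall>a\<in>V. \<exists>U. clopen_in V U \<and> a \<in> U \<and> U \<subseteq> ball a (e/2)"
      using cantor_set_clopen_in_ball[OF V] e by simp
    then show ?thesis
      using that by metis
  qed
  have "V \<subseteq> (\<Union>a\<in>V. - (V - G a))" "\<And>a. a \<in> V \<Longrightarrow> open (- (V - G a))"
    using G clopen_in_open_Compl by auto
  then obtain F where F: "F \<subseteq> V" "finite F" "V \<subseteq> (\<Union>a\<in>F. - (V - G a))"
    using compactE_image[of V V "\<lambda>a. - (V - G a)"] V by (metis cantor_set_def)
  define atom where "atom z = {w \<in> V. \<forall>a\<in>F. w \<in> G a \<longleftrightarrow> z \<in> G a}" for z
  have "clopen_partition V (atom ` V)"
    unfolding atom_def using F G cantor_set_closed[OF V] by (intro clopen_partition_atoms) auto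
  moreover have "diam_less e (atom z)" if z: "z \<in> V" for z
  proof -
    obtain a where a: "a \<in> F" "z \<in> G a"
      using F(3) z by blast
    then have "atom z \<subseteq> ball a (e/2)"
      using G F(1) by (force simp: atom_def)
    then show ?thesis
      by (rule diam_less_subset_ball)
  qed
  ultimately show ?thesis
    using that by blast
qed

lemma clopen_partition_UN:
  assumes Y: "clopen_partition Y (F ` J)" and F: "inj_on F J"
    and G: "\<And>j. j \<in> J \<Longrightarrow> clopen_partition (F j) (G j)"
  shows "clopen_partition Y (\<Union>j\<in>J. G j)"
proof -
  have "finite J"
    using Y F by (auto simp: clopen_partition_def dest: finite_imageD)
  moreover have "clopen_in Y S \<and> S \<noteq> {}" if "j \<in> J" "S \<in> G j" for j S
    using Y G[of j] that clopen_in_trans by (fastforce simp: clopen_partition_def)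
  moreover have "S \<inter> S' = {}" if "j \<in> J" "j' \<in> J" "S \<in> G j" "S' \<in> G j'" "S \<noteq> S'" for j j' S S'
  proof (cases "j = j'")
    case True
    then show ?thesis
      using G[of j] that by (auto simp: clopen_partition_def disjoint_def)
  next
    case False
    then have "F j \<noteq> F j'"
      using F that(1,2) by (auto simp: inj_on_def)
    then have "F j \<inter> F j' = {}"
      using Y that(1,2) unfolding clopen_partition_def disjoint_def by blast
    moreover have "S \<subseteq> F j" "S' \<subseteq> F j'"
      using G that by (auto simp: clopen_partition_def)
    ultimately show ?thesis by blast
  qed
  moreover have "\<Union>(\<Union>j\<in>J. G j) = Y"
  proof -
    have "\<Union>(\<Union>j\<in>J. G j) = (\<Union>j\<in>J. \<Union>(G j))" by blast
    also have "\<dots> = (\<Union>j\<in>J. F j)"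
      using G by (simp add: clopen_partition_def)
    finally show ?thesis
      using Y by (simp add: clopen_partition_def)
  qed
  ultimately show ?thesis
    using G by (auto simp: clopen_partition_def disjoint_def)
qed

lemma cantor_set_indexed_clopen_partition:
  assumes U: "cantor_set U" and J: "finite J" "J \<noteq> {}"
  obtains P where "inj_on P J" "clopen_partition U (P ` J)"
proof -
  obtain Q where Q: "finite_layers U (card J - 1) Q"
    using cantor_set_finite_layers[OF U] by blast
  obtain g where g: "bij_betw g J {0..<card J}"
    using ex_bij_betw_finite_nat[OF J(1)] by blast
  have "card J > 0"
    using J by (simp add: card_gt_0_iff)
  then have ne: "Q m \<noteq> {} \<longleftrightarrow> m < card J" for m
    using Q U by (auto simp: finite_layers_def cantor_set_def)
  have "disjoint_family_on Q {0..<card J}"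
    using Q by (auto simp: finite_layers_def disjoint_family_on_def)
  then have Q_disj: "disjoint (Q ` {0..<card J})" and Q_inj: "inj_on Q {0..<card J}"
    using ne disjoint_family_on_iff_disjoint_image[of "{0..<card J}" Q] by auto
  have "g ` J = {0..<card J}"
    using g by (simp add: bij_betw_def)
  then have image: "(Q \<circ> g) ` J = Q ` {0..<card J}"
    by (metis image_comp)
  have "\<Union>(Q ` {0..<card J}) = (\<Union>m. Q m)"
    using ne by fastforce
  then have "\<Union>(Q ` {0..<card J}) = U"
    using Q by (simp add: finite_layers_def)
  then have "clopen_partition U ((Q \<circ> g) ` J)"
    using Q ne Q_disj unfolding image by (auto simp: clopen_partition_def finite_layers_def)
  moreover have "inj_on (Q \<circ> g) J"
    using g Q_inj by (auto simp: bij_betw_def intro: comp_inj_on)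
  ultimately show ?thesis
    using that by blast
qed

text \<open>Q is the graph of a map from the pieces of a clopen partition of X onto the pieces of a
  clopen partition of Y.\<close>
definition clopen_matching :: "'a::topological_space set \<Rightarrow> 'a set \<Rightarrow> ('a set \<times> 'a set) set \<Rightarrow> bool" where
  "clopen_matching X Y Q \<longleftrightarrow> clopen_partition X (fst ` Q) \<and> inj_on fst Q \<and> clopen_partition Y (snd ` Q)"

lemma clopen_matching_finite: "clopen_matching X Y Q \<Longrightarrow> finite Q"
  by (auto simp: clopen_matching_def clopen_partition_def dest: finite_imageD)

definition refines :: "('a set \<times> 'b set) set \<Rightarrow> ('a set \<times> 'b set) set \<Rightarrow> bool" where
  "refines Q' Q \<longleftrightarrow> (\<forall>q'\<in>Q'. \<exists>q\<in>Q. fst q' \<subseteq> fst q \<and> snd q' \<subseteq> snd q)"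

lemma clopen_matching_glue:
  assumes Q: "clopen_matching X Y Q"
    and PV: "\<And>V. V \<in> snd ` Q \<Longrightarrow> clopen_partition V (PV V)"
    and SU: "\<And>q. q \<in> Q \<Longrightarrow> inj_on (SU q) (PV (snd q)) \<and> clopen_partition (fst q) (SU q ` PV (snd q))"
  defines "Q' \<equiv> \<Union>q\<in>Q. (\<lambda>W. (SU q W, W)) ` PV (snd q)"
  shows "clopen_matching X Y Q'" "refines Q' Q"
proof -
  have QX: "clopen_partition X (fst ` Q)" and Qinj: "inj_on fst Q" and QY: "clopen_partition Y (snd ` Q)"
    using Q by (auto simp: clopen_matching_def)
  have "fst ` Q' = (\<Union>q\<in>Q. SU q ` PV (snd q))"
    by (auto simp: Q'_def image_UN image_image)
  then have "clopen_partition X (fst ` Q')"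
    using clopen_partition_UN[OF QX Qinj] SU by simp
  moreover have "snd ` Q' = (\<Union>V\<in>snd ` Q. PV V)"
    by (auto simp: Q'_def image_UN image_image)
  then have "clopen_partition Y (snd ` Q')"
    using clopen_partition_UN[of Y id "snd ` Q" PV] QY PV by simp
  moreover have "inj_on fst Q'"
  proof (rule inj_onI)
    fix q1 q2 assume "q1 \<in> Q'" "q2 \<in> Q'" "fst q1 = fst q2"
    then obtain q q' W W' where qW: "q \<in> Q" "W \<in> PV (snd q)" "q' \<in> Q" "W' \<in> PV (snd q')"
      and q12: "q1 = (SU q W, W)" "q2 = (SU q' W', W')" and eq: "SU q W = SU q' W'"
      by (auto simp: Q'_def)
    have "SU q W \<subseteq> fst q" "SU q W \<noteq> {}" "SU q' W' \<subseteq> fst q'"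
      using SU[of q] SU[of q'] qW by (auto simp: clopen_partition_def clopen_in_def)
    then have "fst q \<inter> fst q' \<noteq> {}"
      using eq by blast
    then have "fst q = fst q'"
      using QX qW unfolding clopen_partition_def disjoint_def by blast
    then have "q = q'"
      using Qinj qW by (auto simp: inj_on_def)
    then show "q1 = q2"
      using SU[of q] qW eq q12 by (auto simp: inj_on_def)
  qed
  ultimately show "clopen_matching X Y Q'"
    by (simp add: clopen_matching_def)
  show "refines Q' Q"
    using SU PV unfolding refines_def Q'_def clopen_partition_def clopen_in_def by fastforce
qed

lemma clopen_matching_refine:
  assumes X: "cantor_set X" and Y: "cantor_set Y" and Q: "clopen_matching X Y Q" and e: "e > 0"
  obtains Q' where "clopen_matching X Y Q'" "refines Q' Q" "\<And>q. q \<in> Q' \<Longrightarrow> diam_less e (snd q)"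
proof -
  have QX: "clopen_partition X (fst ` Q)" and QY: "clopen_partition Y (snd ` Q)"
    using Q by (auto simp: clopen_matching_def)
  have "\<forall>V\<in>snd ` Q. \<exists>\<P>. clopen_partition V \<P> \<and> (\<forall>W\<in>\<P>. diam_less e W)"
    using QY Y cantor_set_clopen_partition_member cantor_set_small_clopen_partition[OF _ e] by metis
  then obtain PV where PV: "\<And>V. V \<in> snd ` Q \<Longrightarrow> clopen_partition V (PV V) \<and> (\<forall>W\<in>PV V. diam_less e W)"
    by metis
  have "\<forall>q\<in>Q. \<exists>P. inj_on P (PV (snd q)) \<and> clopen_partition (fst q) (P ` PV (snd q))"
  proof
    fix q assume q: "q \<in> Q"
    have "PV (snd q) \<noteq> {}" "finite (PV (snd q))"
      using PV[of "snd q"] QY q by (auto simp: clopen_partition_def)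
    moreover have "cantor_set (fst q)"
      using QX X q cantor_set_clopen_partition_member by blast
    ultimately show "\<exists>P. inj_on P (PV (snd q)) \<and> clopen_partition (fst q) (P ` PV (snd q))"
      using cantor_set_indexed_clopen_partition by metis
  qed
  then obtain SU where SU: "\<And>q. q \<in> Q \<Longrightarrow> inj_on (SU q) (PV (snd q)) \<and> clopen_partition (fst q) (SU q ` PV (snd q))"
    by metis
  have "\<And>V. V \<in> snd ` Q \<Longrightarrow> clopen_partition V (PV V)"
    using PV by blast
  note glue = clopen_matching_glue[OF Q this SU]
  show ?thesis
  proof (rule that[OF glue])
    fix q assume "q \<in> (\<Union>q\<in>Q. (\<lambda>W. (SU q W, W)) ` PV (snd q))"
    then show "diam_less e (snd q)"
      using PV by force
  qed
qed

lemma cantor_set_clopen_matching_sequence: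
  assumes X: "cantor_set X" and Y: "cantor_set Y"
  obtains Qs where "\<And>n. clopen_matching X Y (Qs n)" "\<And>n. refines (Qs (Suc n)) (Qs n)"
    "\<And>n q. q \<in> Qs n \<Longrightarrow> diam_less (inverse (real (Suc n))) (snd q)"
proof -
  define P where "P n Q \<longleftrightarrow> clopen_matching X Y Q \<and> (\<forall>q\<in>Q. diam_less (inverse (real (Suc n))) (snd q))"
    for n Q
  have "clopen_matching X Y {(X, Y)}"
    using X Y by (auto simp: clopen_matching_def clopen_partition_def cantor_set_def
        clopen_in_self compact_imp_closed)
  then have "\<exists>Q. P 0 Q"
    using clopen_matching_refine[OF X Y, of _ 1] by (metis P_def One_nat_def of_nat_1 inverse_1 zero_less_one)
  moreover have "\<exists>Q'. P (Suc n) Q' \<and> refines Q' Q" if "P n Q" for n Q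
    using clopen_matching_refine[OF X Y, of Q "inverse (real (Suc (Suc n)))"] that
    by (metis P_def of_nat_0_less_iff positive_imp_inverse_positive zero_less_Suc)
  ultimately obtain Qs where "\<And>n. P n (Qs n) \<and> refines (Qs (Suc n)) (Qs n)"
    using dependent_nat_choice[of P "\<lambda>_ Q Q'. refines Q' Q"] by blast
  then show ?thesis
    using that unfolding P_def by blast
qed

lemma dist_less_inverse_Suc_imp_eq:
  fixes a b :: "'a::metric_space"
  assumes "\<And>n. dist a b < inverse (real (Suc n))"
  shows "a = b"
  using assms reals_Archimedean[of "dist a b"] by (metis dist_pos_lt not_less_iff_gr_or_eq)

lemma compact_decseq_Inter_nonempty:
  assumes "compact U" "\<And>n. closed (S n)" "\<And>n. S n \<noteq> {}" "\<And>n. S n \<subseteq> U" "decseq S"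
  shows "\<exists>x. \<forall>n. x \<in> S n"
proof -
  have "(\<Inter>n. S n) \<noteq> {}"
    using assms by (intro compact_space_imp_nest[of "top_of_set U"])
      (auto simp: compact_space_subtopology closed_subset)
  then show ?thesis by blast
qed

locale clopen_matching_sequence =
  fixes X Y :: "'a::metric_space set" and Qs :: "nat \<Rightarrow> ('a set \<times> 'a set) set"
  assumes compact_X: "compact X" and compact_Y: "compact Y"
    and matching: "\<And>n. clopen_matching X Y (Qs n)"
    and refines: "\<And>n. refines (Qs (Suc n)) (Qs n)"
    and small: "\<And>n q. q \<in> Qs n \<Longrightarrow> diam_less (inverse (real (Suc n))) (snd q)"
begin

lemma matching_member:
  assumes "q \<in> Qs n"
  shows "clopen_in X (fst q)" "fst q \<noteq> {}" "clopen_in Y (snd q)" "snd q \<noteq> {}"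
  using matching[of n] assms by (auto simp: clopen_matching_def clopen_partition_def)

definition piece :: "nat \<Rightarrow> 'a \<Rightarrow> 'a set \<times> 'a set" where
  "piece n x = (THE q. q \<in> Qs n \<and> x \<in> fst q)"

lemma piece_unique:
  assumes "q \<in> Qs n" "x \<in> fst q"
  shows "piece n x = q"
proof -
  have "q' = q" if "q' \<in> Qs n" "x \<in> fst q'" for q'
  proof -
    have "disjoint (fst ` Qs n)" "inj_on fst (Qs n)"
      using matching[of n] by (auto simp: clopen_matching_def clopen_partition_def)
    moreover have "fst q' \<inter> fst q \<noteq> {}"
      using assms that by blast
    ultimately have "fst q' = fst q"
      using assms(1) that(1) unfolding disjoint_def by blast
    then show ?thesis
      using matching[of n] assms that by (auto simp: clopen_matching_def inj_on_def)
  qed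
  then show ?thesis
    unfolding piece_def using assms by blast
qed

lemma piece:
  assumes "x \<in> X"
  shows "piece n x \<in> Qs n" "x \<in> fst (piece n x)"
proof -
  obtain q where "q \<in> Qs n" "x \<in> fst q"
    using matching[of n] assms by (auto simp: clopen_matching_def clopen_partition_def)
  then show "piece n x \<in> Qs n" "x \<in> fst (piece n x)"
    using piece_unique by auto
qed

lemma piece_Suc_subset:
  assumes "x \<in> X"
  shows "snd (piece (Suc n) x) \<subseteq> snd (piece n x)"
proof -
  obtain q where q: "q \<in> Qs n" "fst (piece (Suc n) x) \<subseteq> fst q" "snd (piece (Suc n) x) \<subseteq> snd q"
    using refines[of n] piece[OF assms, of "Suc n"] unfolding refines_def by blast
  then have "piece n x = q"
    using piece[OF assms, of "Suc n"] by (intro piece_unique) auto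
  then show ?thesis
    using q by simp
qed

definition limit :: "'a \<Rightarrow> 'a" where
  "limit x = (SOME y. \<forall>n. y \<in> snd (piece n x))"

lemma limit_in_piece:
  assumes "x \<in> X"
  shows "limit x \<in> snd (piece n x)"
proof -
  have "\<exists>y. \<forall>n. y \<in> snd (piece n x)"
  proof (rule compact_decseq_Inter_nonempty[OF compact_Y])
    show "closed (snd (piece n x))" "snd (piece n x) \<noteq> {}" "snd (piece n x) \<subseteq> Y" for n
      using matching_member[OF piece(1)[OF assms]] by (auto simp: clopen_in_def)
    show "decseq (\<lambda>n. snd (piece n x))"
      using piece_Suc_subset[OF assms] by (intro decseq_SucI)
  qed
  then have "\<forall>n. limit x \<in> snd (piece n x)"
    unfolding limit_def by (rule someI_ex)
  then show ?thesis ..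
qed

lemma continuous_on_limit: "continuous_on X limit"
  unfolding continuous_on_iff
proof (intro ballI allI impI)
  fix x and e :: real assume x: "x \<in> X" and e: "e > 0"
  obtain n where n: "inverse (real (Suc n)) < e"
    using reals_Archimedean[OF e] by auto
  obtain d where d: "d > 0" "\<forall>y\<in>X. dist y x < d \<longrightarrow> y \<in> fst (piece n x)"
    using clopen_in_dist_nbhd matching_member(1) piece[OF x] by metis
  have "dist (limit y) (limit x) < e" if "y \<in> X" "dist y x < d" for y
  proof -
    have "piece n y = piece n x"
      using d that piece[OF x] by (intro piece_unique) auto
    then show ?thesis
      using small[OF piece(1)[OF x]] limit_in_piece[OF x, of n] limit_in_piece[OF that(1), of n] n
      unfolding diam_less_def by fastforce
  qed
  then show "\<exists>d>0. \<forall>y\<in>X. dist y x < d \<longrightarrow> dist (limit y) (limit x) < e"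
    using d(1) by blast
qed

lemma limit_image_subset: "limit ` X \<subseteq> Y"
  using limit_in_piece matching_member(3) piece(1) by (fastforce simp: clopen_in_def)

text \<open>A point of Y is the limit of any point lying, at every level, in a piece whose image
  contains it.\<close>
lemma limit_image_superset: "Y \<subseteq> limit ` X"
proof
  fix y assume y: "y \<in> Y"
  define S where "S n = \<Union>(fst ` {q \<in> Qs n. y \<in> snd q})" for n
  have "\<exists>x. \<forall>n. x \<in> S n"
  proof (rule compact_decseq_Inter_nonempty[OF compact_X])
    fix n
    have "finite (Qs n)"
      using clopen_matching_finite[OF matching] .
    then show "closed (S n)"
      unfolding S_def using matching_member(1) by (intro closed_Union) (auto simp: clopen_in_def)
    show "S n \<noteq> {}"
      using matching[of n] y matching_member(2)
      by (fastforce simp: S_def clopen_matching_def clopen_partition_def)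
    show "S n \<subseteq> X"
      using matching_member(1) by (auto simp: S_def clopen_in_def)
  next
    show "decseq S"
    proof (rule decseq_SucI)
      fix n show "S (Suc n) \<subseteq> S n"
        using refines[of n] unfolding S_def refines_def by blast
    qed
  qed
  then obtain x where x: "\<And>n. x \<in> S n"
    by blast
  have "y \<in> snd (piece n x)" for n
  proof -
    obtain q where "q \<in> Qs n" "y \<in> snd q" "x \<in> fst q"
      using x[of n] by (auto simp: S_def)
    then show ?thesis
      using piece_unique by auto
  qed
  moreover have "x \<in> X"
    using x[of 0] matching_member(1) by (fastforce simp: S_def clopen_in_def)
  ultimately have "limit x = y"
    using small piece(1) limit_in_piece unfolding diam_less_def
    by (intro dist_less_inverse_Suc_imp_eq) blast
  then show "y \<in> limit ` X"
    using \<open>x \<in> X\<close> by blast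
qed

end

lemma cantor_set_continuous_surjection:
  fixes X Y :: "'a::metric_space set"
  assumes X: "cantor_set X" and Y: "cantor_set Y"
  obtains s where "continuous_on X s" "s ` X = Y"
proof -
  obtain Qs where "clopen_matching_sequence X Y Qs"
    using cantor_set_clopen_matching_sequence[OF X Y] X Y
    by (metis cantor_set_def clopen_matching_sequence.intro)
  then interpret clopen_matching_sequence X Y Qs .
  show ?thesis
    using that continuous_on_limit limit_image_subset limit_image_superset by blast
qed

section \<open>Orbits of self-maps of finite sets\<close>

lemma funpow_mem: "p ` I \<subseteq> I \<Longrightarrow> i \<in> I \<Longrightarrow> (p ^^ k) i \<in> I"
  by (induction k) auto

lemma funpow_funpow: "(f ^^ m) ((f ^^ n) x) = (f ^^ (m + n)) x"
  by (simp add: funpow_add)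

lemma funpow_repeats:
  assumes F: "finite F" "f ` F \<subseteq> F" and x: "x \<in> F"
  shows "\<exists>u v. u < v \<and> v \<le> card F \<and> (f ^^ u) x = (f ^^ v) x"
proof -
  have "(\<lambda>k. (f ^^ k) x) ` {0..card F} \<subseteq> F"
    using funpow_mem[OF F(2) x] by auto
  then have "card ((\<lambda>k. (f ^^ k) x) ` {0..card F}) \<le> card F"
    using F(1) card_mono by blast
  then have "card ((\<lambda>k. (f ^^ k) x) ` {0..card F}) < card {0..card F}"
    by simp
  then have "\<not> inj_on (\<lambda>k. (f ^^ k) x) {0..card F}"
    by (rule pigeonhole)
  then obtain u v where "u \<le> card F" "v \<le> card F" "u \<noteq> v" "(f ^^ u) x = (f ^^ v) x"
    unfolding inj_on_def by auto
  then show ?thesis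
    by (metis linorder_neqE_nat order.strict_trans2)
qed

lemma finally_periodic_if_enters_invariant:
  assumes F: "finite F" "f ` F \<subseteq> F" and n: "(f ^^ n) x \<in> F"
  shows "finally_periodic f x"
proof -
  obtain u v where uv: "u < v" "(f ^^ u) ((f ^^ n) x) = (f ^^ v) ((f ^^ n) x)"
    using funpow_repeats[OF F n] by blast
  have "(f ^^ ((v - u) + Suc (u + n))) x = f ((f ^^ (v + n)) x)"
    using uv(1) by (simp add: funpow_add)
  also have "\<dots> = (f ^^ Suc (u + n)) x"
    using uv(2) by (simp add: funpow_add)
  finally show ?thesis
    unfolding finally_periodic_def using uv(1) by (intro exI[of _ "Suc (u + n)"] exI[of _ "v - u"]) simp
qed

definition periodic_points :: "'a set \<Rightarrow> ('a \<Rightarrow> 'a) \<Rightarrow> 'a set" where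
  "periodic_points I p = {i \<in> I. \<exists>m>0. (p ^^ m) i = i}"

lemma periodic_points_subset: "periodic_points I p \<subseteq> I"
  by (auto simp: periodic_points_def)

lemma funpow_card_periodic:
  assumes I: "finite I" "p ` I \<subseteq> I" and i: "i \<in> I"
  shows "(p ^^ card I) i \<in> periodic_points I p"
proof -
  obtain u v where uv: "u < v" "v \<le> card I" "(p ^^ u) i = (p ^^ v) i"
    using funpow_repeats[OF I i] by blast
  have "v - u + card I = card I - u + v" "card I - u + u = card I"
    using uv(1,2) by simp_all
  then have "(p ^^ (v - u)) ((p ^^ card I) i) = (p ^^ (card I - u)) ((p ^^ v) i)"
    by (simp only: funpow_funpow)
  also have "\<dots> = (p ^^ card I) i"
    using uv(3) \<open>card I - u + u = card I\<close> by (metis funpow_funpow)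
  finally show ?thesis
    using uv(1) funpow_mem[OF I(2) i] unfolding periodic_points_def
    by (auto intro!: exI[of _ "v - u"])
qed

lemma funpow_fixed_point: "f x = x \<Longrightarrow> (f ^^ n) x = x"
  by (induction n) auto

lemma periodic_points_image_subset:
  assumes "p ` I \<subseteq> I"
  shows "p ` periodic_points I p \<subseteq> periodic_points I p"
  using assms by (auto simp: periodic_points_def funpow_swap1[symmetric])

lemma inj_on_periodic_points: "inj_on p (periodic_points I p)"
proof (rule inj_onI)
  fix c1 c2 assume c: "c1 \<in> periodic_points I p" "c2 \<in> periodic_points I p" "p c1 = p c2"
  then obtain m1 m2 where m: "m1 > 0" "(p ^^ m1) c1 = c1" "m2 > 0" "(p ^^ m2) c2 = c2"
    by (auto simp: periodic_points_def)
  then have "(p ^^ (m1 * m2)) c1 = c1" "(p ^^ (m1 * m2)) c2 = c2"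
    using funpow_fixed_point[of "p ^^ m1" c1 m2] funpow_fixed_point[of "p ^^ m2" c2 m1]
    by (simp_all add: funpow_mult mult.commute)
  moreover obtain M where "m1 * m2 = Suc M"
    using m by (metis gr0_conv_Suc nat_0_less_mult_iff)
  ultimately have "(p ^^ M) (p c1) = c1" "(p ^^ M) (p c2) = c2"
    by (simp_all add: funpow_swap1)
  then show "c1 = c2"
    using c(3) by metis
qed

lemma periodic_points_image:
  assumes "finite I" "p ` I \<subseteq> I"
  shows "p ` periodic_points I p = periodic_points I p"
  using assms finite_subset[OF periodic_points_subset]
  by (intro endo_inj_surj periodic_points_image_subset inj_on_periodic_points)

definition preperiod :: "'a set \<Rightarrow> ('a \<Rightarrow> 'a) \<Rightarrow> 'a \<Rightarrow> nat" where
  "preperiod I p i = (LEAST k. (p ^^ k) i \<in> periodic_points I p)"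

lemma preperiod_le_card:
  assumes "finite I" "p ` I \<subseteq> I" "i \<in> I"
  shows "preperiod I p i \<le> card I"
  unfolding preperiod_def using funpow_card_periodic[OF assms] by (rule Least_le)

lemma preperiod_periodic: "i \<in> periodic_points I p \<Longrightarrow> preperiod I p i = 0"
  unfolding preperiod_def by (rule Least_eq_0) simp

lemma preperiod_step:
  assumes I: "finite I" "p ` I \<subseteq> I" and i: "i \<in> I" "i \<notin> periodic_points I p"
  shows "preperiod I p i = Suc (preperiod I p (p i))"
proof -
  have reach: "(p ^^ preperiod I p j) j \<in> periodic_points I p" if "j \<in> I" for j
    unfolding preperiod_def using funpow_card_periodic[OF I that] by (rule LeastI)
  have "preperiod I p i \<noteq> 0"
    using reach[OF i(1)] i(2) by (metis funpow_0)
  then obtain d where d: "preperiod I p i = Suc d"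
    using not0_implies_Suc by blast
  then have "(p ^^ d) (p i) \<in> periodic_points I p"
    using reach[OF i(1)] by (simp add: funpow_swap1)
  then have "preperiod I p (p i) \<le> d"
    unfolding preperiod_def by (rule Least_le)
  moreover have "(p ^^ Suc (preperiod I p (p i))) i \<in> periodic_points I p"
    using reach[of "p i"] I i by (auto simp: funpow_swap1)
  then have "preperiod I p i \<le> Suc (preperiod I p (p i))"
    unfolding preperiod_def by (rule Least_le)
  ultimately show ?thesis
    using d by simp
qed

section \<open>The construction\<close>

locale endo_partition =
  fixes K :: "'a::metric_space set" and T :: "'a \<Rightarrow> 'a" and Ks :: "nat \<Rightarrow> 'a set" and N :: nat
  assumes K_cantor: "cantor_set K"
    and T_endo: "endomorphism K T"
    and Ks_cantor: "\<And>i. i \<in> {1..N} \<Longrightarrow> cantor_set (Ks i)"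
    and Ks_disjoint: "\<And>i j. i \<in> {1..N} \<Longrightarrow> j \<in> {1..N} \<Longrightarrow> i \<noteq> j \<Longrightarrow> Ks i \<inter> Ks j = {}"
    and K_eq: "K = (\<Union>i\<in>{1..N}. Ks i)"
begin

abbreviation I :: "nat set" where
  "I \<equiv> {1..N}"

definition preim :: "nat \<Rightarrow> 'a set" where
  "preim i = {x \<in> K. T x \<in> Ks i}"

definition cell :: "nat \<Rightarrow> nat \<Rightarrow> 'a set" where
  "cell i j = preim i \<inter> Ks j"

lemma K_closed: "closed K"
  using cantor_set_closed[OF K_cantor] .

lemma T_image: "T ` K = K"
  using T_endo by (simp add: endomorphism_def)

lemma Ks_subset: "i \<in> I \<Longrightarrow> Ks i \<subseteq> K"
  using K_eq by auto

lemma Ks_unique: "i \<in> I \<Longrightarrow> j \<in> I \<Longrightarrow> x \<in> Ks i \<Longrightarrow> x \<in> Ks j \<Longrightarrow> i = j"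
  using Ks_disjoint by blast

lemma Ks_cover: "x \<in> K \<Longrightarrow> \<exists>i\<in>I. x \<in> Ks i"
  using K_eq by blast

lemma preim_unique: "i \<in> I \<Longrightarrow> j \<in> I \<Longrightarrow> x \<in> preim i \<Longrightarrow> x \<in> preim j \<Longrightarrow> i = j"
  unfolding preim_def using Ks_unique by blast

lemma preim_cover: "x \<in> K \<Longrightarrow> \<exists>i\<in>I. x \<in> preim i"
  using Ks_cover T_image by (fastforce simp: preim_def)

lemma Ks_clopen: "i \<in> I \<Longrightarrow> clopen_in K (Ks i)"
  using Ks_cantor cantor_set_closed Ks_disjoint K_eq
  by (intro clopen_in_partition[of I]) (auto simp: disjoint_family_on_def)

lemma preim_clopen: "i \<in> I \<Longrightarrow> clopen_in K (preim i)"
proof (rule clopen_in_partition[of I])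
  show "closed (preim j)" if "j \<in> I" for j
  proof -
    have "preim j = K \<inter> T -` Ks j"
      by (auto simp: preim_def)
    then show ?thesis
      using T_endo K_closed Ks_cantor[OF that] cantor_set_closed
      by (metis continuous_closed_preimage endomorphism_def)
  qed
  show "disjoint_family_on preim I"
    using preim_unique by (auto simp: disjoint_family_on_def)
  show "K = (\<Union>j\<in>I. preim j)"
    using preim_cover by (auto simp: preim_def)
qed auto

lemma cell_clopen: "i \<in> I \<Longrightarrow> j \<in> I \<Longrightarrow> clopen_in K (cell i j)"
  unfolding cell_def using preim_clopen Ks_clopen clopen_in_Int by blast

lemma cell_unique:
  "i \<in> I \<Longrightarrow> j \<in> I \<Longrightarrow> i' \<in> I \<Longrightarrow> j' \<in> I \<Longrightarrow> x \<in> cell i j \<Longrightarrow> x \<in> cell i' j' \<Longrightarrow> i = i' \<and> j = j'"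
  unfolding cell_def using preim_unique Ks_unique by blast

lemma cell_cantor: "i \<in> I \<Longrightarrow> j \<in> I \<Longrightarrow> cell i j \<noteq> {} \<Longrightarrow> cantor_set (cell i j)"
  using cantor_set_clopen_in[OF K_cantor cell_clopen] by blast

lemma ex_cell_from: "i \<in> I \<Longrightarrow> \<exists>j\<in>I. cell i j \<noteq> {}"
proof -
  assume i: "i \<in> I"
  obtain y where "y \<in> Ks i"
    using Ks_cantor[OF i] by (auto simp: cantor_set_def)
  then obtain x where "x \<in> K" "T x \<in> Ks i"
    using Ks_subset[OF i] T_image by (metis imageE subsetD)
  then show ?thesis
    using Ks_cover by (fastforce simp: cell_def preim_def)
qed

lemma ex_cell_to: "j \<in> I \<Longrightarrow> \<exists>i\<in>I. cell i j \<noteq> {}"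
proof -
  assume j: "j \<in> I"
  obtain x where "x \<in> Ks j"
    using Ks_cantor[OF j] by (auto simp: cantor_set_def)
  then show ?thesis
    using preim_cover Ks_subset[OF j] by (fastforce simp: cell_def)
qed

definition nxt :: "nat \<Rightarrow> nat" where
  "nxt i = (SOME j. j \<in> I \<and> cell i j \<noteq> {})"

lemma nxt:
  assumes "i \<in> I"
  shows "nxt i \<in> I \<and> cell i (nxt i) \<noteq> {}"
proof -
  have "\<exists>j. j \<in> I \<and> cell i j \<noteq> {}"
    using ex_cell_from[OF assms] by blast
  then show ?thesis
    unfolding nxt_def by (rule someI_ex)
qed

lemma nxt_image: "nxt ` I \<subseteq> I"
  using nxt by blast

abbreviation cyclic :: "nat set" where
  "cyclic \<equiv> periodic_points I nxt"

lemma cyclic_subset: "c \<in> cyclic \<Longrightarrow> c \<in> I"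
  by (simp add: periodic_points_def)

definition cyc_pred :: "nat \<Rightarrow> nat" where
  "cyc_pred = the_inv_into cyclic nxt"

lemma cyc_pred:
  assumes "c \<in> cyclic"
  shows "cyc_pred c \<in> cyclic" "nxt (cyc_pred c) = c"
proof -
  have "c \<in> nxt ` cyclic"
    using assms periodic_points_image[OF _ nxt_image] by simp
  then show "cyc_pred c \<in> cyclic" "nxt (cyc_pred c) = c"
    unfolding cyc_pred_def using inj_on_periodic_points
    by (auto intro: the_inv_into_into f_the_inv_into_f)
qed

lemma cyc_pred_nxt: "c \<in> cyclic \<Longrightarrow> cyc_pred (nxt c) = c"
  unfolding cyc_pred_def using inj_on_periodic_points by (rule the_inv_into_f_f)

lemma nxt_cyclic: "c \<in> cyclic \<Longrightarrow> nxt c \<in> cyclic"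
  using periodic_points_image_subset[OF nxt_image] by blast

text \<open>Pieces ending in Ks j are cut into height j + 1 layers; since the preperiod decreases
  by one along nxt, the layers of cell i (nxt i) reach one level higher than those ending in Ks i.\<close>
definition height :: "nat \<Rightarrow> nat" where
  "height j = N - preperiod I nxt j"

lemma height_cyclic: "c \<in> cyclic \<Longrightarrow> height c = N"
  by (simp add: height_def preperiod_periodic)

lemma height_nxt:
  assumes "i \<in> I" "i \<notin> cyclic"
  shows "height (nxt i) = Suc (height i)"
proof -
  have "preperiod I nxt i = Suc (preperiod I nxt (nxt i))" "preperiod I nxt i \<le> N"
    using preperiod_step[OF _ nxt_image assms] preperiod_le_card[OF _ nxt_image assms(1)] by auto
  then show ?thesis
    by (simp add: height_def)
qed

definition is_tower :: "nat \<Rightarrow> nat \<Rightarrow> bool" where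
  "is_tower i j \<longleftrightarrow> i \<in> cyclic \<and> j = nxt i"

definition tower :: "nat \<Rightarrow> 'a \<times> (nat \<Rightarrow> 'a set)" where
  "tower c = (SOME (a, P). converging_layers (cell c (nxt c)) a P)"

definition apex :: "nat \<Rightarrow> 'a" where
  "apex c = fst (tower c)"

definition layers :: "nat \<Rightarrow> nat \<Rightarrow> nat \<Rightarrow> 'a set" where
  "layers i j = (if is_tower i j then snd (tower i) else (SOME P. finite_layers (cell i j) (height j) P))"

lemma tower_layers:
  assumes "c \<in> cyclic"
  shows "converging_layers (cell c (nxt c)) (apex c) (layers c (nxt c))"
proof -
  have "cantor_set (cell c (nxt c))"
    using assms nxt cell_cantor cyclic_subset by blast
  then obtain a where "a \<in> cell c (nxt c)"
    by (auto simp: cantor_set_def)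
  then obtain P where "converging_layers (cell c (nxt c)) a P"
    using cantor_set_converging_layers[OF \<open>cantor_set (cell c (nxt c))\<close>] by blast
  then have "\<exists>q. converging_layers (cell c (nxt c)) (fst q) (snd q)"
    by (intro exI[of _ "(a, P)"]) simp
  then have "converging_layers (cell c (nxt c)) (fst (tower c)) (snd (tower c))"
    unfolding tower_def by (metis (mono_tags, lifting) case_prod_beta someI_ex)
  then show ?thesis
    using assms by (simp add: apex_def layers_def is_tower_def)
qed

lemma finite_layers_layers:
  assumes "i \<in> I" "j \<in> I" "\<not> is_tower i j"
  shows "finite_layers (cell i j) (height j) (layers i j)"
proof -
  have "\<exists>P. finite_layers (cell i j) (height j) P"
    using cantor_set_finite_layers cell_cantor[OF assms(1,2)] finite_layers_empty by metis
  then show ?thesis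
    unfolding layers_def using assms(3) by (simp add: someI_ex)
qed

lemma layers_cases:
  assumes "i \<in> I" "j \<in> I"
  obtains "is_tower i j" "converging_layers (cell i j) (apex i) (layers i j)"
  | "\<not> is_tower i j" "finite_layers (cell i j) (height j) (layers i j)"
  using assms tower_layers finite_layers_layers by (metis is_tower_def)

lemma layers_clopen_in_cell: "i \<in> I \<Longrightarrow> j \<in> I \<Longrightarrow> clopen_in (cell i j) (layers i j m)"
  by (erule layers_cases) (auto simp: converging_layers_def finite_layers_def)

lemma layers_clopen: "i \<in> I \<Longrightarrow> j \<in> I \<Longrightarrow> clopen_in K (layers i j m)"
  using clopen_in_trans[OF cell_clopen layers_clopen_in_cell] .

lemma layers_subset_cell: "i \<in> I \<Longrightarrow> j \<in> I \<Longrightarrow> layers i j m \<subseteq> cell i j"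
  using layers_clopen_in_cell by (simp add: clopen_in_def)

lemma layers_disjoint:
  "i \<in> I \<Longrightarrow> j \<in> I \<Longrightarrow> m \<noteq> m' \<Longrightarrow> layers i j m \<inter> layers i j m' = {}"
  by (erule layers_cases) (auto simp: converging_layers_def finite_layers_def disjoint_family_on_def)

lemma layers_nonempty_iff:
  "i \<in> I \<Longrightarrow> j \<in> I \<Longrightarrow> layers i j m \<noteq> {} \<longleftrightarrow> cell i j \<noteq> {} \<and> (m \<le> height j \<or> is_tower i j)"
  by (erule layers_cases) (auto simp: converging_layers_def finite_layers_def)

lemma cell_in_layers:
  "i \<in> I \<Longrightarrow> j \<in> I \<Longrightarrow> x \<in> cell i j \<Longrightarrow> (is_tower i j \<and> x = apex i) \<or> (\<exists>m. x \<in> layers i j m)"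
  by (erule layers_cases) (auto simp: converging_layers_def finite_layers_def)

lemma apex_in_cell: "c \<in> cyclic \<Longrightarrow> apex c \<in> cell c (nxt c)"
  using tower_layers by (simp add: converging_layers_def)

lemma apex_notin_layers: "c \<in> cyclic \<Longrightarrow> apex c \<notin> layers c (nxt c) m"
  using tower_layers by (auto simp: converging_layers_def)

definition layer :: "nat \<Rightarrow> 'a set" where
  "layer m = (\<Union>i\<in>I. \<Union>j\<in>I. layers i j m)"

definition apices :: "'a set" where
  "apices = apex ` cyclic"

lemma layer_clopen: "clopen_in K (layer m)"
  unfolding layer_def using K_closed layers_clopen by (intro clopen_in_UN) auto

lemma layer_subset: "layer m \<subseteq> K"
  using layer_clopen by (simp add: clopen_in_def)

lemma layers_subset_layer: "i \<in> I \<Longrightarrow> j \<in> I \<Longrightarrow> layers i j m \<subseteq> layer m"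
  unfolding layer_def by blast

lemma in_layer_cell:
  assumes "x \<in> layer m"
  obtains i j where "i \<in> I" "j \<in> I" "x \<in> layers i j m" "x \<in> cell i j"
  using assms layers_subset_cell unfolding layer_def by blast

lemma apex_mem:
  assumes "c \<in> cyclic"
  shows "apex c \<in> preim c" "apex c \<in> Ks (nxt c)" "apex c \<in> K"
  using apex_in_cell[OF assms] by (auto simp: cell_def preim_def)

lemma apex_notin_layer: "x \<in> apices \<Longrightarrow> x \<notin> layer m"
proof
  assume "x \<in> apices" "x \<in> layer m"
  then obtain c i j where c: "c \<in> cyclic" "x = apex c" and ij: "i \<in> I" "j \<in> I"
    "x \<in> layers i j m" "x \<in> cell i j"
    by (auto simp: apices_def elim: in_layer_cell)
  then have "i = c" "j = nxt c"
    using cell_unique apex_in_cell cyclic_subset nxt by blast+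
  then show False
    using apex_notin_layers c ij by blast
qed

lemma layer_unique: "x \<in> layer m \<Longrightarrow> x \<in> layer m' \<Longrightarrow> m = m'"
proof (erule in_layer_cell, erule in_layer_cell)
  fix i j i' j' assume "i \<in> I" "j \<in> I" "x \<in> layers i j m" "x \<in> cell i j"
    "i' \<in> I" "j' \<in> I" "x \<in> layers i' j' m'" "x \<in> cell i' j'"
  then show "m = m'"
    using cell_unique layers_disjoint by blast
qed

lemma layer_cover:
  assumes "x \<in> K" "x \<notin> apices"
  shows "\<exists>m. x \<in> layer m"
proof -
  obtain i j where ij: "i \<in> I" "j \<in> I" "x \<in> cell i j"
    using assms(1) preim_cover Ks_cover by (metis IntI cell_def)
  moreover have "\<not> (is_tower i j \<and> x = apex i)"
    using assms(2) by (auto simp: is_tower_def apices_def)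
  ultimately show ?thesis
    using cell_in_layers layers_subset_layer by blast
qed

definition layer_of :: "'a \<Rightarrow> nat" where
  "layer_of x = (THE m. x \<in> layer m)"

definition preim_index :: "'a \<Rightarrow> nat" where
  "preim_index x = (THE i. i \<in> I \<and> x \<in> preim i)"

lemma layer_of: "x \<in> layer m \<Longrightarrow> layer_of x = m"
  unfolding layer_of_def using layer_unique by blast

lemma preim_index: "i \<in> I \<Longrightarrow> x \<in> preim i \<Longrightarrow> preim_index x = i"
  unfolding preim_index_def using preim_unique by blast

lemma preim_index_mem: "x \<in> K \<Longrightarrow> preim_index x \<in> I \<and> x \<in> preim (preim_index x)"
  using preim_cover preim_index by blast

lemma T_in_Ks_preim_index: "x \<in> K \<Longrightarrow> T x \<in> Ks (preim_index x)"
  using preim_index_mem by (simp add: preim_def)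

definition src :: "nat \<Rightarrow> nat \<Rightarrow> 'a set" where
  "src m i = layer m \<inter> preim i"

definition tgt :: "nat \<Rightarrow> nat \<Rightarrow> 'a set" where
  "tgt m i = layer m \<inter> Ks i"

lemma src_clopen: "i \<in> I \<Longrightarrow> clopen_in K (src m i)"
  unfolding src_def using layer_clopen preim_clopen clopen_in_Int by blast

lemma tgt_clopen: "i \<in> I \<Longrightarrow> clopen_in K (tgt m i)"
  unfolding tgt_def using layer_clopen Ks_clopen clopen_in_Int by blast

lemma layers_subset_src: "i \<in> I \<Longrightarrow> j \<in> I \<Longrightarrow> layers i j m \<subseteq> src m i"
  using layers_subset_layer layers_subset_cell by (fastforce simp: src_def cell_def)

lemma layers_subset_tgt: "i \<in> I \<Longrightarrow> j \<in> I \<Longrightarrow> layers i j m \<subseteq> tgt m j"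
  using layers_subset_layer layers_subset_cell by (fastforce simp: tgt_def cell_def)

lemma in_tgt_layers:
  assumes "i \<in> I" "y \<in> tgt m i"
  obtains i' where "i' \<in> I" "y \<in> layers i' i m"
proof -
  obtain i' j where "i' \<in> I" "j \<in> I" "y \<in> layers i' j m" "y \<in> cell i' j"
    using assms(2) by (auto simp: tgt_def elim: in_layer_cell)
  moreover have "y \<in> Ks j" "y \<in> Ks i"
    using calculation(4) assms(2) by (auto simp: tgt_def cell_def)
  ultimately show ?thesis
    using that Ks_unique assms(1) by blast
qed

lemma tgt_0_nonempty: "i \<in> I \<Longrightarrow> tgt 0 i \<noteq> {}"
  using ex_cell_to layers_nonempty_iff layers_subset_tgt by blast

text \<open>This is what the choice of heights is for: every point of a target layer has a
  preimage one layer up.\<close>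
lemma src_Suc_nonempty:
  assumes i: "i \<in> I" and ne: "tgt m i \<noteq> {}"
  shows "src (Suc m) i \<noteq> {}"
proof -
  obtain i' y where i': "i' \<in> I" "y \<in> layers i' i m"
    using ne in_tgt_layers[OF i] by blast
  then have "m \<le> height i \<or> is_tower i' i"
    using layers_nonempty_iff[OF i'(1) i] by blast
  then have "Suc m \<le> height (nxt i) \<or> is_tower i (nxt i)"
    using height_nxt[OF i] nxt_cyclic by (auto simp: is_tower_def)
  then have "layers i (nxt i) (Suc m) \<noteq> {}"
    using layers_nonempty_iff[OF i] nxt[OF i] by blast
  then show ?thesis
    using layers_subset_src[OF i] nxt[OF i] by blast
qed

text \<open>Above level N only the towers have layers.\<close>
lemma tgt_above_height:
  assumes c: "c \<in> cyclic" and m: "N < m"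
  shows "tgt m c \<subseteq> layers (cyc_pred c) c m"
proof
  fix y assume "y \<in> tgt m c"
  then obtain i' where i': "i' \<in> I" "y \<in> layers i' c m"
    using in_tgt_layers cyclic_subset[OF c] by blast
  then have "is_tower i' c"
    using layers_nonempty_iff[OF i'(1) cyclic_subset[OF c], of m] height_cyclic[OF c] m by auto
  then have "i' = cyc_pred c"
    using cyc_pred_nxt by (auto simp: is_tower_def)
  then show "y \<in> layers (cyc_pred c) c m"
    using i' by simp
qed

definition anchor :: "nat \<Rightarrow> 'a" where
  "anchor i = (SOME y. y \<in> tgt 0 i)"

lemma anchor: "i \<in> I \<Longrightarrow> anchor i \<in> tgt 0 i"
  unfolding anchor_def using tgt_0_nonempty by (simp add: some_in_eq)

definition onto_map :: "nat \<Rightarrow> nat \<Rightarrow> 'a \<Rightarrow> 'a" where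
  "onto_map m i = (SOME s. continuous_on (src m i) s \<and> s ` src m i = tgt (m - 1) i)"

lemma onto_map:
  assumes i: "i \<in> I" and ne: "src m i \<noteq> {}" "tgt (m - 1) i \<noteq> {}"
  shows "continuous_on (src m i) (onto_map m i)" "onto_map m i ` src m i = tgt (m - 1) i"
proof -
  have "cantor_set (src m i)" "cantor_set (tgt (m - 1) i)"
    using cantor_set_clopen_in[OF K_cantor] src_clopen[OF i] tgt_clopen[OF i] ne by blast+
  then have "\<exists>s. continuous_on (src m i) s \<and> s ` src m i = tgt (m - 1) i"
    using cantor_set_continuous_surjection by metis
  then have "continuous_on (src m i) (onto_map m i) \<and> onto_map m i ` src m i = tgt (m - 1) i"
    unfolding onto_map_def by (rule someI_ex)
  then show "continuous_on (src m i) (onto_map m i)" "onto_map m i ` src m i = tgt (m - 1) i"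
    by auto
qed

definition layer_map :: "nat \<Rightarrow> nat \<Rightarrow> 'a \<Rightarrow> 'a" where
  "layer_map m i = (if 0 < m \<and> tgt (m - 1) i \<noteq> {} then onto_map m i else (\<lambda>_. anchor i))"

definition T' :: "'a \<Rightarrow> 'a" where
  "T' x = (if x \<in> apices then apex (cyc_pred (preim_index x))
    else layer_map (layer_of x) (preim_index x) x)"

lemma T'_apex:
  assumes "c \<in> cyclic"
  shows "T' (apex c) = apex (cyc_pred c)"
proof -
  have "preim_index (apex c) = c"
    using preim_index[OF cyclic_subset apex_mem(1)] assms by blast
  then show ?thesis
    using assms by (simp add: T'_def apices_def)
qed

lemma T'_src:
  assumes "i \<in> I" "x \<in> src m i"
  shows "T' x = layer_map m i x"
proof -
  have "x \<notin> apices" "layer_of x = m" "preim_index x = i"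
    using assms apex_notin_layer layer_of preim_index by (auto simp: src_def)
  then show ?thesis
    by (simp add: T'_def)
qed

lemma continuous_on_layer_map: "i \<in> I \<Longrightarrow> continuous_on (src m i) (layer_map m i)"
  using onto_map(1) by (cases "src m i = {}") (auto simp: layer_map_def)

lemma layer_map_tgt:
  "i \<in> I \<Longrightarrow> x \<in> src m i \<Longrightarrow> 0 < m \<Longrightarrow> tgt (m - 1) i \<noteq> {} \<Longrightarrow> layer_map m i x \<in> tgt (m - 1) i"
  using onto_map(2) by (auto simp: layer_map_def)

lemma layer_map_Ks: "i \<in> I \<Longrightarrow> x \<in> src m i \<Longrightarrow> layer_map m i x \<in> Ks i"
  using layer_map_tgt anchor by (auto simp: layer_map_def tgt_def)

lemma in_src_layer_of: "x \<in> K \<Longrightarrow> x \<notin> apices \<Longrightarrow> x \<in> src (layer_of x) (preim_index x)"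
  using layer_cover layer_of preim_index_mem by (fastforce simp: src_def)

lemma T'_Ks: "x \<in> K \<Longrightarrow> T' x \<in> Ks (preim_index x)"
proof (cases "x \<in> apices")
  case True
  then obtain c where "c \<in> cyclic" "x = apex c"
    by (auto simp: apices_def)
  then show ?thesis
    using T'_apex preim_index apex_mem cyc_pred cyclic_subset by metis
next
  case False
  assume "x \<in> K"
  then show ?thesis
    using in_src_layer_of T'_src layer_map_Ks preim_index_mem False by metis
qed

lemma T'_Ks_iff: "x \<in> K \<Longrightarrow> i \<in> I \<Longrightarrow> T' x \<in> Ks i \<longleftrightarrow> T x \<in> Ks i"
  using T'_Ks T_in_Ks_preim_index preim_index_mem Ks_unique by metis

lemma T'_image: "T' ` K = K"
proof
  show "T' ` K \<subseteq> K"
    using T'_Ks preim_index_mem Ks_subset by blast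
  show "K \<subseteq> T' ` K"
  proof
    fix y assume y: "y \<in> K"
    show "y \<in> T' ` K"
    proof (cases "y \<in> apices")
      case True
      then obtain c where c: "c \<in> cyclic" "y = apex c"
        by (auto simp: apices_def)
      then have "T' (apex (nxt c)) = y"
        using T'_apex nxt_cyclic cyc_pred_nxt by simp
      then show ?thesis
        using apex_mem(3) nxt_cyclic[OF c(1)] by (metis imageI)
    next
      case False
      then obtain m i where i: "i \<in> I" "y \<in> tgt m i"
        using layer_cover[OF y] Ks_cover[OF y] by (auto simp: tgt_def)
      then obtain x where "x \<in> src (Suc m) i" "onto_map (Suc m) i x = y"
        using onto_map(2)[OF i(1) src_Suc_nonempty] by (metis diff_Suc_1 empty_iff imageE)
      moreover have "layer_map (Suc m) i = onto_map (Suc m) i"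
        using i by (auto simp: layer_map_def)
      ultimately show ?thesis
        using T'_src[OF i(1)] src_clopen[OF i(1)] by (metis clopen_in_def image_eqI subsetD)
    qed
  qed
qed

lemma tower_nbhd:
  assumes c: "c \<in> cyclic"
  shows "\<exists>d>0. \<forall>y\<in>K. dist y (apex c) < d \<longrightarrow> y = apex c \<or> (\<exists>m\<ge>n. y \<in> layers c (nxt c) m)"
proof -
  obtain d1 where d1: "d1 > 0"
    "\<forall>y\<in>cell c (nxt c). dist y (apex c) < d1 \<longrightarrow> y = apex c \<or> (\<exists>m\<ge>n. y \<in> layers c (nxt c) m)"
    using converging_layers_nbhd[OF tower_layers[OF c]] by blast
  obtain d2 where d2: "d2 > 0" "\<forall>y\<in>K. dist y (apex c) < d2 \<longrightarrow> y \<in> cell c (nxt c)"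
    using clopen_in_dist_nbhd[OF cell_clopen apex_in_cell[OF c]] c cyclic_subset nxt by blast
  show ?thesis
    using d1 d2 by (intro exI[of _ "min d1 d2"]) auto
qed

text \<open>Deep layers of the tower over c are mapped into the tower over its predecessor on the
  cycle, one level lower; this gives continuity at the apices.\<close>
lemma T'_tower_layers:
  assumes c: "c \<in> cyclic" and m: "Suc N < m" and y: "y \<in> layers c (nxt c) m"
  shows "T' y \<in> layers (cyc_pred c) c (m - 1)"
proof -
  have cI: "c \<in> I" "nxt c \<in> I" and pc: "cyc_pred c \<in> cyclic" "nxt (cyc_pred c) = c"
    using c cyclic_subset nxt cyc_pred by blast+
  have pcI: "cyc_pred c \<in> I"
    using cyclic_subset pc(1) by blast
  have "is_tower (cyc_pred c) c" "cell (cyc_pred c) c \<noteq> {}"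
    using pc nxt[OF pcI] by (auto simp: is_tower_def)
  then have "layers (cyc_pred c) c (m - 1) \<noteq> {}"
    using layers_nonempty_iff[OF pcI cI(1)] by blast
  then have "tgt (m - 1) c \<noteq> {}"
    using layers_subset_tgt[OF pcI cI(1)] by blast
  moreover have "y \<in> src m c"
    using layers_subset_src[OF cI] y by blast
  ultimately have "T' y \<in> tgt (m - 1) c"
    using T'_src[OF cI(1)] layer_map_tgt[OF cI(1)] m by simp
  moreover have "N < m - 1"
    using m by simp
  ultimately show ?thesis
    using tgt_above_height[OF c] by blast
qed

lemma continuous_T'_at_apex:
  assumes c: "c \<in> cyclic" and e: "e > 0"
  shows "\<exists>d>0. \<forall>y\<in>K. dist y (apex c) < d \<longrightarrow> dist (T' y) (T' (apex c)) < e"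
proof -
  obtain k where k: "inverse (real (Suc k)) < e"
    using reals_Archimedean[OF e] by blast
  obtain d where d: "d > 0"
    "\<forall>y\<in>K. dist y (apex c) < d \<longrightarrow> y = apex c \<or> (\<exists>m\<ge>Suc (Suc (N + k)). y \<in> layers c (nxt c) m)"
    using tower_nbhd[OF c] by blast
  have "dist (T' y) (T' (apex c)) < e" if "y \<in> layers c (nxt c) m" "Suc (Suc (N + k)) \<le> m" for y m
  proof -
    have "T' y \<in> layers (cyc_pred c) (nxt (cyc_pred c)) (m - 1)"
      using T'_tower_layers[OF c _ that(1)] that(2) cyc_pred[OF c] by simp
    moreover have "k < m - 1"
      using that(2) by simp
    ultimately have "T' y \<in> ball (apex (cyc_pred c)) (inverse (real (Suc k)))"
      using tower_layers[OF cyc_pred(1)[OF c]] unfolding converging_layers_def by blast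
    then have "dist (apex (cyc_pred c)) (T' y) < inverse (real (Suc k))"
      by simp
    then show ?thesis
      using T'_apex[OF c] k by (simp add: dist_commute)
  qed
  then show ?thesis
    using d e by (metis dist_self)
qed

lemma continuous_on_T': "continuous_on K T'"
  unfolding continuous_on_iff
proof (intro ballI allI impI)
  fix x and e :: real assume x: "x \<in> K" and e: "e > 0"
  show "\<exists>d>0. \<forall>y\<in>K. dist y x < d \<longrightarrow> dist (T' y) (T' x) < e"
  proof (cases "x \<in> apices")
    case True
    then show ?thesis
      using continuous_T'_at_apex e by (auto simp: apices_def)
  next
    case False
    define m i where "m = layer_of x" and "i = preim_index x"
    have i: "i \<in> I" and xs: "x \<in> src m i"
      using in_src_layer_of[OF x False] preim_index_mem[OF x] by (auto simp: m_def i_def)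
    obtain d1 where d1: "d1 > 0" "\<forall>y\<in>K. dist y x < d1 \<longrightarrow> y \<in> src m i"
      using clopen_in_dist_nbhd[OF src_clopen[OF i] xs] by blast
    obtain d2 where d2: "d2 > 0" "\<forall>y\<in>src m i. dist y x < d2 \<longrightarrow> dist (layer_map m i y) (layer_map m i x) < e"
      using continuous_on_layer_map[OF i] xs e unfolding continuous_on_iff by blast
    show ?thesis
      using d1 d2 T'_src[OF i] xs by (intro exI[of _ "min d1 d2"]) auto
  qed
qed

lemma T'_layer_0: "x \<in> layer 0 \<Longrightarrow> T' x = anchor (preim_index x)"
  using T'_src[of "preim_index x" x 0] preim_index_mem[of x] layer_subset
  by (auto simp: src_def layer_map_def)

lemma T'_reaches_finite_invariant:
  "x \<in> layer m \<Longrightarrow> \<exists>n. (T' ^^ n) x \<in> apices \<union> anchor ` I"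
proof (induction m arbitrary: x)
  case 0
  then have "preim_index x \<in> I"
    using preim_index_mem layer_subset by blast
  then have "(T' ^^ 1) x \<in> anchor ` I"
    using T'_layer_0[OF 0] by simp
  then show ?case by blast
next
  case (Suc m)
  define i where "i = preim_index x"
  have i: "i \<in> I" and x: "x \<in> src (Suc m) i"
    using Suc.prems preim_index_mem layer_subset by (auto simp: i_def src_def)
  show ?case
  proof (cases "tgt m i = {}")
    case True
    then have "(T' ^^ 1) x \<in> anchor ` I"
      using T'_src[OF i x] i by (simp add: layer_map_def)
    then show ?thesis by blast
  next
    case False
    then have "T' x \<in> layer m"
      using T'_src[OF i x] layer_map_tgt[OF i x] by (simp add: tgt_def)
    then obtain n where "(T' ^^ n) (T' x) \<in> apices \<union> anchor ` I"
      using Suc.IH by blast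
    then have "(T' ^^ Suc n) x \<in> apices \<union> anchor ` I"
      by (simp add: funpow_swap1)
    then show ?thesis by blast
  qed
qed

lemma finally_periodic_T': "x \<in> K \<Longrightarrow> finally_periodic T' x"
proof -
  assume x: "x \<in> K"
  have fin: "finite (apices \<union> anchor ` I)"
    by (auto simp: apices_def intro: finite_subset[OF periodic_points_subset])
  have inv: "T' ` (apices \<union> anchor ` I) \<subseteq> apices \<union> anchor ` I"
  proof -
    have "T' (apex c) \<in> apices" if "c \<in> cyclic" for c
      using T'_apex cyc_pred that by (simp add: apices_def)
    moreover have "T' (anchor i) \<in> anchor ` I" if "i \<in> I" for i
    proof -
      have "anchor i \<in> layer 0"
        using anchor[OF that] by (simp add: tgt_def)
      then show ?thesis
        using T'_layer_0 preim_index_mem layer_subset by blast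
    qed
    ultimately show ?thesis
      by (auto simp: apices_def)
  qed
  have "\<exists>n. (T' ^^ n) x \<in> apices \<union> anchor ` I"
  proof (cases "x \<in> apices")
    case True
    then have "(T' ^^ 0) x \<in> apices \<union> anchor ` I"
      by simp
    then show ?thesis ..
  next
    case False
    then show ?thesis
      using x layer_cover T'_reaches_finite_invariant by blast
  qed
  then show ?thesis
    using finally_periodic_if_enters_invariant[OF fin inv] by blast
qed

end

theorem theorem3p1:
  fixes K :: "'a::metric_space set" and T :: "'a \<Rightarrow> 'a"
    and Ks :: "nat \<Rightarrow> 'a set" and N :: nat
  assumes "cantor_set K"
    and "endomorphism K T"
    and "\<And>i. i \<in> {1..N} \<Longrightarrow> cantor_set (Ks i)"
    and "\<And>i j. i \<in> {1..N} \<Longrightarrow> j \<in> {1..N} \<Longrightarrow> i \<noteq> j \<Longrightarrow> Ks i \<inter> Ks j = {}"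
    and "K = (\<Union>i\<in>{1..N}. Ks i)"
  shows "\<exists>T'. endomorphism K T'
           \<and> (\<forall>x\<in>K. \<forall>i\<in>{1..N}. T' x \<in> Ks i \<longleftrightarrow> T x \<in> Ks i)
           \<and> (\<forall>x\<in>K. finally_periodic T' x)"
proof -
  interpret endo_partition K T Ks N
    using assms by unfold_locales
  show ?thesis
    using continuous_on_T' T'_image T'_Ks_iff finally_periodic_T'
    by (intro exI[of _ T']) (auto simp: endomorphism_def)
qed

end
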